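(* For every $m\geq1$ and every $i\in\{1,\dots,N\}$, $$C^{(2m+1)}_{ii}\cdot v=C^{(2m+1)}_{-i,-i}\cdot v=\lambda_i(\lambda_i-1)\,C^{(2m-1)}_{ii}\cdot v-2\lambda_i\sum_{j=i+1}^{N}C^{(2m-1)}_{jj}\cdot v.$$
   Context: Let $N\geq1$, $I=\{-N,\dots,-1,1,\dots,N\}$, and for $k\in I$ put $\bar k=0$ if $k>0$, $\bar k=1$ if $k<0$. The Lie superalgebra $\mathfrak{q}(N)$ over $\mathbb{C}$ is spanned by elements $F_{ij}$ ($i,j\in I$) with $F_{-i,-j}=F_{ij}$ (realized as $F_{ij}=E_{ij}+E_{-i,-j}\in\mathfrak{gl}(N|N)$), $F_{ij}$ of parity $\bar\imath+\bar\jmath\bmod 2$, and supercommutator $$[F_{ij}, F_{kl}] = \delta_{kj} F_{il} - (-1)^{(\bar{\imath}+ \bar{\jmath})(\bar{k} + \bar{l})} \delta_{il} F_{kj} + \delta_{k,-j} F_{-i,l} - (-1)^{(\bar{\imath} + \bar{\jmath})(\bar{k} + \bar{l})} \delta_{-i,l} F_{k,-j}.$$ For $n\geq1$ define $C^{(n)}_{ij}\in U(\mathfrak{q}(N))$ by $$C^{(n)}_{ij} = \sum_{k_1,\ldots,k_{n-1}\in I}F_{ik_1} (-1)^{\bar{k}_1} F_{k_1k_2} (-1)^{\bar{k}_2} \cdots F_{k_{n-2}k_{n-1}} (-1)^{\bar{k}_{n-1}} F_{k_{n-1}j}$$ (so $C^{(1)}_{ij}=F_{ij}$). Let $V$ be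 a representation of $\mathfrak{q}(N)$ and $v\in V$ a vector such that $F_{ij}\cdot v=0$ whenever $|i|<|j|$, and $F_{ii}\cdot v=\lambda_i v$ for $i=1,\dots,N$, where $\lambda_1,\dots,\lambda_N\in\mathbb{C}$. *)

theory Defs
  imports Complex_Main
begin

definition qI :: "nat \<Rightarrow> int set" where
  "qI N = {-int N..-1} \<union> {1..int N}"

definition par :: "int \<Rightarrow> nat" where
  "par k = (if k < 0 then 1 else 0)"

definition qsgn :: "int \<Rightarrow> int \<Rightarrow> int \<Rightarrow> int \<Rightarrow> complex" where
  "qsgn i j k l = (-1) ^ ((par i + par j) * (par k + par l))"

text \<open>A representation of q(N) on the complex vector space (V, sc): operators F i j
  (the images of the generators F_ij), linear, with F(-i,-j) = F(i,j), satisfying the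
  supercommutator relations of q(N).\<close>
definition is_qrep ::
  "(complex \<Rightarrow> 'v::ab_group_add \<Rightarrow> 'v) \<Rightarrow> nat \<Rightarrow> (int \<Rightarrow> int \<Rightarrow> 'v \<Rightarrow> 'v) \<Rightarrow> bool" where
  "is_qrep sc N F \<longleftrightarrow>
     vector_space sc \<and>
     (\<forall>i\<in>qI N. \<forall>j\<in>qI N. Vector_Spaces.linear sc sc (F i j) \<and> F (-i) (-j) = F i j) \<and>
     (\<forall>i\<in>qI N. \<forall>j\<in>qI N. \<forall>k\<in>qI N. \<forall>l\<in>qI N. \<forall>x.
        F i j (F k l x) - sc (qsgn i j k l) (F k l (F i j x)) =
          (if k = j then F i l x else 0)
          - sc (qsgn i j k l) (if i = l then F k j x else 0)
          + (if k = -j then F (-i) l x else 0)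
          - sc (qsgn i j k l) (if -i = l then F k (-j) x else 0))"

text \<open>Action of C^{(n)}_{ij} (n \<ge> 1) on a vector x:
  C^{(1)}_{ij} = F_ij and C^{(n+1)}_{ij} = sum_k F_ik (-1)^{bar k} C^{(n)}_{kj}.
  The value for n = 0 is irrelevant (set to 0).\<close>
fun Cact :: "(complex \<Rightarrow> 'v::ab_group_add \<Rightarrow> 'v) \<Rightarrow> nat \<Rightarrow> (int \<Rightarrow> int \<Rightarrow> 'v \<Rightarrow> 'v)
              \<Rightarrow> nat \<Rightarrow> int \<Rightarrow> int \<Rightarrow> 'v \<Rightarrow> 'v" where
  "Cact sc N F 0 i j x = 0"
| "Cact sc N F (Suc 0) i j x = F i j x"
| "Cact sc N F (Suc (Suc n)) i j x =
     (\<Sum>k\<in>qI N. F i k (sc ((-1) ^ par k) (Cact sc N F (Suc n) k j x)))"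

end

theory Submission
  imports Defs
begin

text \<open>
  Two structural facts about the matrices C^(n) drive the proof. Their entries supercommute with
  every generator F_ab exactly as the F_kl do, because C^(n+1) is the product of F, the diagonal
  sign matrix ((-1)^bar(k)) and C^(n); and C^(n)_{-k,-l} = (-1)^(n-1) C^(n)_{kl}.

  For a singular vector u and |b| = i, expand C^(n+1)_{ib} u = sum_k (-1)^bar(k) C^(n)_{ik} F_kb u.
  Terms with |k| < i vanish since F_kb u = 0; for |k| > i the commutation relations move F_kb to
  the left, where it meets C^(n)_{ik} u = 0, and only diagonal entries survive. With u = v, b = i
  this expresses C_{ii} v through C_{i,-i} w, where w = F_{i,-i} v is again singular with
  F_{i,-i} w = lambda_i v; with u = w, b = -i it expresses C_{i,-i} w back through C_{ii} v. By the
  parity symmetry the contributions of j and -j, j > i, double or cancel according to the parity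
  of n, and eliminating C_{i,-i} w gives the two-step recursion.
\<close>

definition par_sign :: "int \<Rightarrow> complex" where
  "par_sign k = (-1) ^ par k"

lemma qI_iff: "k \<in> qI N \<longleftrightarrow> k \<noteq> 0 \<and> \<bar>k\<bar> \<le> int N"
  unfolding qI_def by auto

lemma uminus_qI_iff [simp]: "-k \<in> qI N \<longleftrightarrow> k \<in> qI N"
  unfolding qI_iff by auto

lemma finite_qI [simp]: "finite (qI N)"
  unfolding qI_def by simp

lemma sum_qI_reflect: "(\<Sum>k\<in>qI N. f (-k)) = (\<Sum>k\<in>qI N. f k)"
  by (rule sum.reindex_bij_witness[of _ uminus uminus]) auto

lemma sum_qI_pairs: "(\<Sum>k\<in>qI N. f k) = (\<Sum>j\<in>{1..int N}. f j + f (-j))"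
proof -
  have "(\<Sum>k\<in>{-int N..-1}. f k) = (\<Sum>j\<in>{1..int N}. f (-j))"
    by (rule sum.reindex_bij_witness[of _ uminus uminus]) auto
  then show ?thesis
    unfolding qI_def by (simp add: sum.union_disjoint sum.distrib add.commute)
qed

lemma sum_qI_split_at:
  assumes "i \<in> {1..int N}"
  shows "(\<Sum>k\<in>qI N. f k) = (\<Sum>j\<in>{1..<i}. f j + f (-j)) + (f i + f (-i))
           + (\<Sum>j\<in>{i+1..int N}. f j + f (-j))"
proof -
  have "{1..int N} = insert i ({1..<i} \<union> {i+1..int N})" using assms by auto
  moreover have "{1..<i} \<inter> {i+1..int N} = {}" by auto
  ultimately show ?thesis
    unfolding sum_qI_pairs by (simp add: sum.union_disjoint ac_simps)
qed

lemma par_sign_pos: "k > 0 \<Longrightarrow> par_sign k = 1"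
  and par_sign_neg: "k < 0 \<Longrightarrow> par_sign k = -1"
  unfolding par_sign_def par_def by auto

lemma par_sign_uminus: "k \<noteq> 0 \<Longrightarrow> par_sign (-k) = - par_sign k"
  unfolding par_sign_def par_def by auto

lemma qsgn_square [simp]: "qsgn a b c d * qsgn a b c d = 1"
  unfolding qsgn_def by (simp flip: power_mult_distrib)

lemma qsgn_mult: "qsgn a b k q * qsgn a b q l = qsgn a b k l"
  unfolding qsgn_def par_def by auto

lemma par_sign_qsgn_swap: "par_sign a * qsgn a b k a = par_sign b * qsgn a b k b"
  unfolding par_sign_def qsgn_def par_def by auto

lemma par_sign_qsgn_swap_uminus:
  "a \<noteq> 0 \<Longrightarrow> b \<noteq> 0 \<Longrightarrow> par_sign (-a) * qsgn a b k (-a) = par_sign (-b) * qsgn a b k (-b)"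
  unfolding par_sign_def qsgn_def par_def by auto

lemma qsgn_pos_pos_neg: "i > 0 \<Longrightarrow> qsgn i i i (-i) = 1"
  and qsgn_pos_neg_pos_neg: "i > 0 \<Longrightarrow> qsgn i (-i) i (-i) = -1"
  and qsgn_diag: "i > 0 \<Longrightarrow> qsgn k i i k = par_sign k"
  and qsgn_diag_uminus: "i > 0 \<Longrightarrow> qsgn k (-i) i k = 1"
  unfolding qsgn_def par_sign_def par_def by auto

locale qrep = vector_space sc for sc :: "complex \<Rightarrow> 'v::ab_group_add \<Rightarrow> 'v" +
  fixes N :: nat and F :: "int \<Rightarrow> int \<Rightarrow> 'v \<Rightarrow> 'v"
  assumes F_linear: "i \<in> qI N \<Longrightarrow> j \<in> qI N \<Longrightarrow> module_hom sc sc (F i j)"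
    and F_reflect: "i \<in> qI N \<Longrightarrow> j \<in> qI N \<Longrightarrow> F (-i) (-j) = F i j"
    and F_comm: "i \<in> qI N \<Longrightarrow> j \<in> qI N \<Longrightarrow> k \<in> qI N \<Longrightarrow> l \<in> qI N \<Longrightarrow>
        F i j (F k l x) - sc (qsgn i j k l) (F k l (F i j x)) =
          (if k = j then F i l x else 0)
          - sc (qsgn i j k l) (if i = l then F k j x else 0)
          + (if k = -j then F (-i) l x else 0)
          - sc (qsgn i j k l) (if -i = l then F k (-j) x else 0)"

lemma is_qrep_imp_qrep: "is_qrep sc N F \<Longrightarrow> qrep sc N F"
  unfolding is_qrep_def qrep_def qrep_axioms_def by (auto simp: module_hom_iff_linear)

context qrep
begin

abbreviation C :: "nat \<Rightarrow> int \<Rightarrow> int \<Rightarrow> 'v \<Rightarrow> 'v" where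
  "C \<equiv> Cact sc N F"

lemma F_add: "i \<in> qI N \<Longrightarrow> j \<in> qI N \<Longrightarrow> F i j (x + y) = F i j x + F i j y"
  and F_diff: "i \<in> qI N \<Longrightarrow> j \<in> qI N \<Longrightarrow> F i j (x - y) = F i j x - F i j y"
  and F_scale: "i \<in> qI N \<Longrightarrow> j \<in> qI N \<Longrightarrow> F i j (sc c x) = sc c (F i j x)"
  and F_zero: "i \<in> qI N \<Longrightarrow> j \<in> qI N \<Longrightarrow> F i j 0 = 0"
  and F_sum: "i \<in> qI N \<Longrightarrow> j \<in> qI N \<Longrightarrow> F i j (sum g A) = (\<Sum>a\<in>A. F i j (g a))"
  by (fact module_hom.add[OF F_linear] module_hom.diff[OF F_linear] module_hom.scale[OF F_linear]
      module_hom.zero[OF F_linear] module_hom.sum[OF F_linear])+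

lemma C_Suc_Suc:
  "C (Suc (Suc n)) k l x = (\<Sum>q\<in>qI N. sc (par_sign q) (F k q (C (Suc n) q l x)))" if "k \<in> qI N"
  using that by (simp add: F_scale par_sign_def)

declare Cact.simps(3) [simp del]

lemma scale_two: "sc 2 x = x + x"
  using scale_left_distrib[of 1 1 x] by (simp add: one_add_one)

lemma module_pair_sc: "module_pair sc sc"
  by unfold_locales

lemma C_linear: "a \<in> qI N \<Longrightarrow> b \<in> qI N \<Longrightarrow> module_hom sc sc (C (Suc n) a b)"
proof (induction n arbitrary: a)
  case 0
  then show ?case by (simp add: F_linear)
next
  case (Suc n)
  have "module_hom sc sc (\<lambda>x. sc (par_sign q) (F a q (C (Suc n) q b x)))" if "q \<in> qI N" for q
    using module_pair.module_hom_scale[OF module_pair_sc module_hom_compose[OF Suc.IH F_linear]]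
      that Suc.prems by (simp add: comp_def)
  then show ?case
    unfolding C_Suc_Suc[OF Suc.prems(1)]
    by (intro module_pair.module_hom_sum[OF module_pair_sc]) (auto simp: module_axioms)
qed

lemma C_scale: "a \<in> qI N \<Longrightarrow> b \<in> qI N \<Longrightarrow> C (Suc n) a b (sc c x) = sc c (C (Suc n) a b x)"
  and C_zero: "a \<in> qI N \<Longrightarrow> b \<in> qI N \<Longrightarrow> C (Suc n) a b 0 = 0"
  by (fact module_hom.scale[OF C_linear] module_hom.zero[OF C_linear])+

lemma C_Suc_Suc_right: "a \<in> qI N \<Longrightarrow> b \<in> qI N \<Longrightarrow>
  C (Suc (Suc n)) a b x = (\<Sum>k\<in>qI N. sc (par_sign k) (C (Suc n) a k (F k b x)))"
proof (induction n arbitrary: a)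
  case 0
  then show ?case by (simp add: C_Suc_Suc)
next
  case (Suc n)
  have "C (Suc (Suc (Suc n))) a b x
      = (\<Sum>q\<in>qI N. \<Sum>k\<in>qI N. sc (par_sign q) (F a q (sc (par_sign k) (C (Suc n) q k (F k b x)))))"
    using Suc by (simp add: C_Suc_Suc F_sum scale_sum_right)
  also have "\<dots> = (\<Sum>k\<in>qI N. sc (par_sign k) (C (Suc (Suc n)) a k (F k b x)))"
    using Suc.prems by (subst sum.swap) (simp add: C_Suc_Suc F_scale scale_sum_right mult.commute)
  finally show ?case .
qed

lemma C_reflect: "a \<in> qI N \<Longrightarrow> b \<in> qI N \<Longrightarrow>
  C (Suc n) (-a) (-b) x = sc ((-1) ^ n) (C (Suc n) a b x)"
proof (induction n arbitrary: a)
  case 0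
  then show ?case by (simp add: F_reflect)
next
  case (Suc n)
  have "C (Suc (Suc n)) (-a) (-b) x = (\<Sum>q\<in>qI N. sc (par_sign q) (F (-a) q (C (Suc n) q (-b) x)))"
    using Suc.prems by (simp add: C_Suc_Suc)
  also have "\<dots> = (\<Sum>q\<in>qI N. sc (par_sign (-q)) (F (-a) (-q) (C (Suc n) (-q) (-b) x)))"
    by (rule sum_qI_reflect[symmetric])
  also have "\<dots> = (\<Sum>q\<in>qI N. sc ((-1) ^ Suc n) (sc (par_sign q) (F a q (C (Suc n) q b x))))"
    using Suc by (intro sum.cong refl) (auto simp: qI_iff par_sign_uminus F_reflect F_scale mult.commute)
  finally show ?case
    using Suc.prems by (simp add: C_Suc_Suc scale_sum_right)
qed

definition ad_entry :: "(int \<Rightarrow> int \<Rightarrow> 'v \<Rightarrow> 'v) \<Rightarrow> int \<Rightarrow> int \<Rightarrow> int \<Rightarrow> int \<Rightarrow> 'v \<Rightarrow> 'v" where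
  "ad_entry X a b k l x =
     (if k = b then X a l x else 0)
     - sc (qsgn a b k l) (if a = l then X k b x else 0)
     + (if k = -b then X (-a) l x else 0)
     - sc (qsgn a b k l) (if -a = l then X k (-b) x else 0)"

definition ad_covariant :: "(int \<Rightarrow> int \<Rightarrow> 'v \<Rightarrow> 'v) \<Rightarrow> bool" where
  "ad_covariant X \<longleftrightarrow> (\<forall>a\<in>qI N. \<forall>b\<in>qI N. \<forall>k\<in>qI N. \<forall>l\<in>qI N. \<forall>x.
     F a b (X k l x) = ad_entry X a b k l x + sc (qsgn a b k l) (X k l (F a b x)))"

lemma ad_covariant_F: "ad_covariant F"
  unfolding ad_covariant_def ad_entry_def by (auto simp: F_comm[symmetric])

lemma sum_ad_entry_F:
  assumes "a \<in> qI N" "b \<in> qI N" "k \<in> qI N"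
  shows "(\<Sum>q\<in>qI N. sc (par_sign q) (ad_entry F a b k q (y q)))
    = (if k = b then (\<Sum>q\<in>qI N. sc (par_sign q) (F a q (y q))) else 0)
      - sc (par_sign a * qsgn a b k a) (F k b (y a))
      + (if k = -b then (\<Sum>q\<in>qI N. sc (par_sign q) (F (-a) q (y q))) else 0)
      - sc (par_sign (-a) * qsgn a b k (-a)) (F k (-b) (y (-a)))"
  using assms qI_iff[of b]
  by (simp add: ad_entry_def sum.distrib sum_subtractf if_distrib[of "sc _"] scale_right_diff_distrib
      sum.delta scale_scale cong: if_cong)

lemma sum_F_ad_entry:
  assumes "a \<in> qI N" "b \<in> qI N" "k \<in> qI N"
  shows "(\<Sum>q\<in>qI N. sc (par_sign q * qsgn a b k q) (F k q (ad_entry X a b q l x)))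
    = sc (par_sign b * qsgn a b k b) (F k b (X a l x))
      - sc (qsgn a b k l) (if a = l then (\<Sum>q\<in>qI N. sc (par_sign q) (F k q (X q b x))) else 0)
      + sc (par_sign (-b) * qsgn a b k (-b)) (F k (-b) (X (-a) l x))
      - sc (qsgn a b k l) (if -a = l then (\<Sum>q\<in>qI N. sc (par_sign q) (F k q (X q (-b) x))) else 0)"
  using assms
  by (simp add: ad_entry_def sum.distrib sum_subtractf if_distrib[of "sc _"] if_distrib[of "F _ _"]
      F_add F_diff F_scale F_zero scale_right_diff_distrib scale_right_distrib sum.delta' scale_scale
      scale_sum_right qsgn_mult[THEN trans[OF mult.commute]] mult_ac cong: if_cong)

lemma ad_covariant_F_mult:
  assumes "ad_covariant X"
  shows "ad_covariant (\<lambda>k l x. \<Sum>q\<in>qI N. sc (par_sign q) (F k q (X q l x)))"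
    (is "ad_covariant ?Y")
  unfolding ad_covariant_def
proof (intro ballI allI)
  fix a b k l x
  assume ab: "a \<in> qI N" "b \<in> qI N" and kl: "k \<in> qI N" "l \<in> qI N"
  have expand: "F a b (F k q (X q l x))
      = ad_entry F a b k q (X q l x) + sc (qsgn a b k q) (F k q (ad_entry X a b q l x))
        + sc (qsgn a b k l) (F k q (X q l (F a b x)))" if q: "q \<in> qI N" for q
  proof -
    have F_F: "F a b (F k q y) = ad_entry F a b k q y + sc (qsgn a b k q) (F k q (F a b y))" for y
      using ad_covariant_F ab kl q unfolding ad_covariant_def by blast
    have F_X: "F a b (X q l x) = ad_entry X a b q l x + sc (qsgn a b q l) (X q l (F a b x))"
      using assms ab kl q unfolding ad_covariant_def by blast
    show ?thesis
      using kl q by (simp only: F_F F_X F_add F_scale scale_right_distrib scale_scale qsgn_mult add.assoc)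
  qed
  have "F a b (?Y k l x)
      = (\<Sum>q\<in>qI N. sc (par_sign q) (ad_entry F a b k q (X q l x)))
        + (\<Sum>q\<in>qI N. sc (par_sign q * qsgn a b k q) (F k q (ad_entry X a b q l x)))
        + sc (qsgn a b k l) (?Y k l (F a b x))"
    using ab kl by (simp add: expand F_sum F_scale sum.distrib scale_right_distrib scale_sum_right
        mult.commute)
  \<comment> \<open>the terms q = a, -a of the first sum cancel the terms q = b, -b of the second\<close>
  also have "\<dots> = ad_entry ?Y a b k l x + sc (qsgn a b k l) (?Y k l (F a b x))"
    using ab par_sign_qsgn_swap[of a b k] par_sign_qsgn_swap_uminus[of a b k]
    unfolding sum_ad_entry_F[OF ab kl(1)] sum_F_ad_entry[OF ab kl(1)]
    by (simp add: ad_entry_def qI_iff)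
  finally show "F a b (?Y k l x) = ad_entry ?Y a b k l x + sc (qsgn a b k l) (?Y k l (F a b x))" .
qed

lemma ad_covariant_cong:
  assumes "ad_covariant X" and "\<And>k l. k \<in> qI N \<Longrightarrow> l \<in> qI N \<Longrightarrow> Y k l = X k l"
  shows "ad_covariant Y"
  using assms unfolding ad_covariant_def ad_entry_def by simp

lemma ad_covariant_C: "ad_covariant (C (Suc n))"
proof (induction n)
  case 0
  then show ?case using ad_covariant_F by simp
next
  case (Suc n)
  then show ?case
    by (rule ad_covariant_cong[OF ad_covariant_F_mult]) (simp add: C_Suc_Suc)
qed

lemma C_F_exchange:
  assumes "a \<in> qI N" "b \<in> qI N" "k \<in> qI N" and "C (Suc n) a k u = 0"
  shows "C (Suc n) a k (F k b u) = C (Suc n) a b u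
    - sc (qsgn k b a k) ((if a = b then C (Suc n) k k u else 0) + (if a = -b then C (Suc n) (-k) k u else 0))"
proof -
  let ?q = "qsgn k b a k"
  have "F k b (C (Suc n) a k u) = ad_entry (C (Suc n)) k b a k u + sc ?q (C (Suc n) a k (F k b u))"
    using ad_covariant_C assms unfolding ad_covariant_def by blast
  moreover have "-k \<noteq> k"
    using assms by (simp add: qI_iff)
  ultimately have "0 = (if a = b then C (Suc n) k k u else 0) - sc ?q (C (Suc n) a b u)
      + (if a = -b then C (Suc n) (-k) k u else 0) + sc ?q (C (Suc n) a k (F k b u))"
    using assms by (simp add: ad_entry_def F_zero)
  then have "sc ?q (sc ?q (C (Suc n) a k (F k b u))) = sc ?q (sc ?q (C (Suc n) a b u)
      - ((if a = b then C (Suc n) k k u else 0) + (if a = -b then C (Suc n) (-k) k u else 0)))"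
    by (simp add: algebra_simps)
  then show ?thesis
    by (simp add: scale_right_diff_distrib)
qed

definition singular :: "'v \<Rightarrow> bool" where
  "singular u \<longleftrightarrow> (\<forall>a\<in>qI N. \<forall>b\<in>qI N. \<bar>a\<bar> < \<bar>b\<bar> \<longrightarrow> F a b u = 0)"

lemma C_singular:
  assumes "singular u" and "a \<in> qI N" "b \<in> qI N" "\<bar>a\<bar> < \<bar>b\<bar>"
  shows "C (Suc n) a b u = 0"
  using assms(2-)
proof (induction n arbitrary: a b)
  case 0
  then show ?case using assms(1) by (simp add: singular_def)
next
  case (Suc n)
  have "C (Suc n) a k (F k b u) = 0" if k: "k \<in> qI N" for k
  proof (cases "\<bar>k\<bar> < \<bar>b\<bar>")
    case True
    then show ?thesis using assms(1) k Suc.prems by (simp add: singular_def C_zero)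
  next
    case False
    then have "C (Suc n) a k u = 0" using Suc k by simp
    then show ?thesis using C_F_exchange[OF Suc.prems(1,2) k] Suc by auto
  qed
  then show ?case using Suc.prems by (simp add: C_Suc_Suc_right)
qed

lemma C_Suc_Suc_right_singular:
  assumes "singular u" "a \<in> qI N" "i \<in> {1..int N}" "b \<in> {i, -i}"
  shows "C (Suc (Suc n)) a b u = C (Suc n) a i (F i b u) - C (Suc n) a (-i) (F (-i) b u)
    + (\<Sum>j\<in>{i+1..int N}. C (Suc n) a j (F j b u) - C (Suc n) a (-j) (F (-j) b u))"
proof -
  let ?T = "\<lambda>k. sc (par_sign k) (C (Suc n) a k (F k b u))"
  have b: "b \<in> qI N" "\<bar>b\<bar> = i" using assms(3,4) by (auto simp: qI_iff)
  have "(\<Sum>j\<in>{1..<i}. ?T j + ?T (-j)) = 0"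
    using assms(1-3) b by (intro sum.neutral) (auto simp: singular_def qI_iff C_zero)
  moreover have "?T j + ?T (-j) = C (Suc n) a j (F j b u) - C (Suc n) a (-j) (F (-j) b u)"
    if "j > 0" for j
    using that by (simp add: par_sign_pos par_sign_neg)
  ultimately show ?thesis
    using assms(3)
    by (simp add: C_Suc_Suc_right[OF assms(2) b(1)] sum_qI_split_at[OF assms(3)])
qed

end

locale singular_weight_vector = qrep sc N F for sc :: "complex \<Rightarrow> 'v::ab_group_add \<Rightarrow> 'v" and N F +
  fixes v :: 'v and lam :: complex and i :: int
  assumes singular_v: "singular v"
    and i_range: "i \<in> {1..int N}"
    and weight_v: "F i i v = sc lam v"
begin

lemma i_qI: "i \<in> qI N" "-i \<in> qI N" and i_pos: "i > 0"
  using i_range by (auto simp: qI_iff)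

lemma F_uminus_i: "F (-i) i = F i (-i)" "F (-i) (-i) = F i i"
  using F_reflect[OF i_qI(1,2)] F_reflect[OF i_qI(1,1)] by simp_all

definition w :: 'v where
  "w = F i (-i) v"

lemma singular_w: "singular w"
  unfolding singular_def
proof (intro ballI impI)
  fix a b assume ab: "a \<in> qI N" "b \<in> qI N" "\<bar>a\<bar> < \<bar>b\<bar>"
  have v_zero: "F c d v = 0" if "c \<in> qI N" "d \<in> qI N" "\<bar>c\<bar> < \<bar>d\<bar>" for c d
    using singular_v that unfolding singular_def by blast
  show "F a b w = 0"
    using F_comm[OF ab(1,2) i_qI, of v] ab i_qI unfolding w_def
    by (auto simp: v_zero F_zero)
qed

lemma F_i_uminus_i_w: "F i (-i) w = sc lam v"
proof -
  have "F i (-i) w + F i (-i) w = sc lam v + sc lam v"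
    using F_comm[OF i_qI(1,2) i_qI(1,2), of v] i_pos
    by (simp add: w_def qsgn_pos_neg_pos_neg F_uminus_i weight_v)
  then have "sc 2 (F i (-i) w) = sc 2 (sc lam v)"
    by (simp only: scale_two)
  then show ?thesis
    by (simp only: scale_cancel_left) simp
qed

lemma F_i_i_w: "F i i w = sc lam w"
  using F_comm[OF i_qI(1,1) i_qI(1,2), of v] i_pos
  by (simp add: w_def qsgn_pos_pos_neg weight_v F_scale i_qI)

lemma C_Suc_Suc_i_i_v:
  "C (Suc (Suc n)) i i v = sc lam (C (Suc n) i i v) - C (Suc n) i (-i) w
     - sc (1 + (-1) ^ n) (\<Sum>j\<in>{i+1..int N}. C (Suc n) j j v)"
proof -
  have "C (Suc n) i j (F j i v) - C (Suc n) i (-j) (F (-j) i v) = - sc (1 + (-1) ^ n) (C (Suc n) j j v)"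
    if j: "j \<in> {i+1..int N}" for j
  proof -
    have j_qI: "j \<in> qI N" "-j \<in> qI N" "i < \<bar>j\<bar>" "j > 0" using j i_pos by (auto simp: qI_iff)
    then have "C (Suc n) i j v = 0" "C (Suc n) i (-j) v = 0"
      using C_singular[OF singular_v] i_qI i_pos by auto
    then show ?thesis
      using C_F_exchange[OF i_qI(1,1) j_qI(1)] C_F_exchange[OF i_qI(1,1) j_qI(2)] i_pos j_qI
        C_reflect[OF j_qI(1,1), of n v]
      by (simp add: qsgn_diag par_sign_pos par_sign_neg scale_left_distrib)
  qed
  then show ?thesis
    using C_Suc_Suc_right_singular[OF singular_v i_qI(1) i_range, of i n] i_qI
    by (simp add: weight_v F_uminus_i w_def C_scale sum_negf scale_sum_right)
qed

lemma C_Suc_Suc_i_uminus_i_w: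
  assumes "even n"
  shows "C (Suc (Suc n)) i (-i) w = sc lam (C (Suc n) i i v) - sc lam (C (Suc n) i (-i) w)"
proof -
  have "C (Suc n) i j (F j (-i) w) - C (Suc n) i (-j) (F (-j) (-i) w) = 0"
    if j: "j \<in> {i+1..int N}" for j
  proof -
    have j_qI: "j \<in> qI N" "-j \<in> qI N" "i < \<bar>j\<bar>" "j > 0" using j i_pos by (auto simp: qI_iff)
    then have "C (Suc n) i j w = 0" "C (Suc n) i (-j) w = 0"
      using C_singular[OF singular_w] i_qI i_pos by auto
    then show ?thesis
      using C_F_exchange[OF i_qI(1,2) j_qI(1)] C_F_exchange[OF i_qI(1,2) j_qI(2)] i_pos j_qI
        C_reflect[OF j_qI(1,2), of n w] assms
      by (simp add: qsgn_diag_uminus)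
  qed
  then show ?thesis
    using C_Suc_Suc_right_singular[OF singular_w i_qI(1) i_range, of "-i" n] i_qI
    by (simp add: F_i_uminus_i_w F_i_i_w F_uminus_i C_scale)
qed

lemma C_Suc_Suc_Suc_i_i_v:
  assumes "even n"
  shows "C (Suc (Suc (Suc n))) i i v = sc (lam * (lam - 1)) (C (Suc n) i i v)
     - sc (2 * lam) (\<Sum>j\<in>{i+1..int N}. C (Suc n) j j v)"
proof -
  have "(-1::complex) ^ n = 1" "(-1::complex) ^ Suc n = -1"
    using assms by simp_all
  then have "C (Suc (Suc (Suc n))) i i v
      = sc lam (sc lam (C (Suc n) i i v) - C (Suc n) i (-i) w
          - sc 2 (\<Sum>j\<in>{i+1..int N}. C (Suc n) j j v))
        - (sc lam (C (Suc n) i i v) - sc lam (C (Suc n) i (-i) w))"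
    using C_Suc_Suc_i_i_v[of "Suc n"] C_Suc_Suc_i_i_v[of n] C_Suc_Suc_i_uminus_i_w[OF assms] by simp
  then show ?thesis
    by (simp add: algebra_simps)
qed

end

theorem proposition5:
  fixes sc :: "complex \<Rightarrow> 'v::ab_group_add \<Rightarrow> 'v"
    and N :: nat and F :: "int \<Rightarrow> int \<Rightarrow> 'v \<Rightarrow> 'v"
    and v :: 'v and lam :: "int \<Rightarrow> complex" and m :: nat and i :: int
  assumes "N \<ge> 1"
    and "is_qrep sc N F"
    and "\<forall>a\<in>qI N. \<forall>b\<in>qI N. \<bar>a\<bar> < \<bar>b\<bar> \<longrightarrow> F a b v = 0"
    and "\<forall>a\<in>{1..int N}. F a a v = sc (lam a) v"
    and "m \<ge> 1"
    and "i \<in> {1..int N}"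
  shows "Cact sc N F (2*m+1) i i v = Cact sc N F (2*m+1) (-i) (-i) v \<and>
         Cact sc N F (2*m+1) (-i) (-i) v =
           sc (lam i * (lam i - 1)) (Cact sc N F (2*m-1) i i v)
           - sc (2 * lam i) (\<Sum>j\<in>{i+1..int N}. Cact sc N F (2*m-1) j j v)"
proof -
  interpret singular_weight_vector sc N F v "lam i" i
    using is_qrep_imp_qrep[OF assms(2)] assms(3,4,6)
    by (simp add: singular_weight_vector_def singular_weight_vector_axioms_def qrep.singular_def)
  obtain p where p: "m = Suc p"
    using assms(5) by (cases m) auto
  have "C (Suc (Suc (Suc (2*p)))) (-i) (-i) v = C (Suc (Suc (Suc (2*p)))) i i v"
    using C_reflect[OF i_qI(1,1), of "Suc (Suc (2*p))" v] by simp
  then show ?thesis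
    using C_Suc_Suc_Suc_i_i_v[of "2*p"] by (simp add: p)
qed

end
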